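(* Let $X$ be a Dedekind complete Riesz space and let $x,y,z\in X^{s}$ with $x\le y+z$. Then there exist $y_{1},z_{1}\in X^{s}$ such that $y_{1}\le y$, $z_{1}\le z$ and $x=y_{1}+z_{1}$. If in addition $x\in X$, then $y_{1},z_{1}$ can be taken in $X$.
   Context: For a Dedekind complete Riesz space $X$, its sup-completion $X^{s}$ is the set of classes of nonempty upward directed subsets of $X$ under $A\sim B$ iff $\sup_{a\in A}(x\wedge a)=\sup_{b\in B}(x\wedge b)$ for all $x\in X$, with the induced addition, nonnegative scalar multiplication and order; $X$ is identified with a subset of $X^{s}$ via $x\mapsto[\{x\}]$. It is a lattice-ordered cone in which every nonempty subset has a supremum. *)

theory Defs
  imports Complex_Main
begin

text \<open>A Dedekind complete Riesz space is modelled as a type of class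
  ordered_real_vector (ordered vector space over the reals) that is also a
  conditionally_complete_lattice (lattice, every nonempty bounded-above set
  has a supremum), both with respect to the same order.

  Elements of the sup-completion are represented by nonempty upward directed
  subsets of the space; equality of classes is the relation sc_eq, the order
  is sc_le, addition is the elementwise (Minkowski) sum sc_add, and an element
  x of the space is embedded as the singleton set.\<close>

definition updirected :: "'a::order set \<Rightarrow> bool" where
  "updirected A \<longleftrightarrow> A \<noteq> {} \<and> (\<forall>a\<in>A. \<forall>b\<in>A. \<exists>c\<in>A. a \<le> c \<and> b \<le> c)"

definition sc_le :: "'a::conditionally_complete_lattice set \<Rightarrow> 'a set \<Rightarrow> bool" where
  "sc_le A B \<longleftrightarrow> (\<forall>x. Sup ((\<lambda>a. inf x a) ` A) \<le> Sup ((\<lambda>b. inf x b) ` B))"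

definition sc_eq :: "'a::conditionally_complete_lattice set \<Rightarrow> 'a set \<Rightarrow> bool" where
  "sc_eq A B \<longleftrightarrow> (\<forall>x. Sup ((\<lambda>a. inf x a) ` A) = Sup ((\<lambda>b. inf x b) ` B))"

definition sc_add :: "'a::plus set \<Rightarrow> 'a set \<Rightarrow> 'a set" where
  "sc_add A B = {a + b | a b. a \<in> A \<and> b \<in> B}"

end

theory Submission
  imports Defs "HOL-Library.Lattice_Algebras"
begin

text \<open>Write \<open>t \<sqinter> [B]\<close> (\<open>sc_meet B t\<close> below) for \<open>SUP b\<in>B. t \<sqinter> b\<close>, the meet in \<open>X\<^sup>s\<close> of
  \<open>t \<in> X\<close> with the class of \<open>B\<close>; it is again an element of \<open>X\<close>. Fix \<open>c\<^sub>0 \<in> Z\<close>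
  and split every \<open>a\<close> as \<open>a = y a + z a\<close> with \<open>y a = (a - c\<^sub>0) \<sqinter> [Y]\<close>, a translate of
  the classical Riesz decomposition \<open>x = x \<sqinter> y + (x - x \<sqinter> y)\<close>.
  If \<open>a \<le> Y + Z\<close>, then \<open>z a \<le> Z\<close>: for \<open>b \<in> Y\<close> and \<open>c\<^sub>0 \<le> c' \<in> Z\<close> we have
  \<open>a \<sqinter> (b + c') - c' = (a - c') \<sqinter> b \<le> (a - c\<^sub>0) \<sqinter> b \<le> y a\<close>, hence
  \<open>a \<sqinter> (b + c') - y a \<le> z a \<sqinter> c'\<close>, and these \<open>c'\<close> are cofinal in \<open>Z\<close>.
  Both \<open>y\<close> and \<open>z\<close> are increasing, so for directed \<open>X \<le> Y + Z\<close> the images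
  \<open>y ` X\<close> and \<open>z ` X\<close> are directed and their sum is equivalent to \<open>X\<close>;
  for \<open>X \<sim> {x\<^sub>0}\<close> take \<open>y x\<^sub>0\<close> and \<open>z x\<^sub>0\<close>.\<close>

text \<open>The sort \<open>{ordered_ab_group_add, lattice}\<close> is not a subsort of
  \<open>lattice_ab_group_add\<close>, so the lattice-group identities are obtained through the class predicate.\<close>

lemma lattice_ab_group_add_class:
  "class.lattice_ab_group_add (+) 0 (-) uminus (\<le>) (<) inf
     (sup :: 'a::{ordered_ab_group_add, lattice} \<Rightarrow> 'a \<Rightarrow> 'a)"
  by intro_locales

lemmas group_add_sup_inf_distribs =
  lattice_ab_group_add.add_sup_inf_distribs[OF lattice_ab_group_add_class]

lemmas group_add_eq_inf_sup =
  lattice_ab_group_add.add_eq_inf_sup[OF lattice_ab_group_add_class]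

lemma bdd_above_image_inf: "bdd_above ((\<lambda>b. inf t b) ` (B :: 'a::lattice set))"
  by (rule bdd_aboveI2[of _ _ t]) simp

lemma inf_cSup_distrib:
  fixes S :: "'a::{ordered_ab_group_add, conditionally_complete_lattice} set"
  assumes "S \<noteq> {}" and "bdd_above S"
  shows "inf x (Sup S) = (SUP s\<in>S. inf x s)"
proof (rule antisym)
  define m where "m = (SUP s\<in>S. inf x s)"
  have upper: "s \<le> m + sup x (Sup S) - x" if "s \<in> S" for s
  proof -
    have "inf x s \<le> m"
      unfolding m_def using that bdd_above_image_inf by (rule cSUP_upper)
    moreover have "sup x s \<le> sup x (Sup S)"
      using that assms(2) by (simp add: cSup_upper le_supI2)
    ultimately have "inf x s + sup x s \<le> m + sup x (Sup S)"
      by (rule add_mono)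
    then show ?thesis
      using group_add_eq_inf_sup[of x s] by (simp add: algebra_simps le_diff_eq)
  qed
  have "Sup S \<le> m + sup x (Sup S) - x"
    by (rule cSup_least[OF assms(1) upper])
  then show "inf x (Sup S) \<le> m"
    using group_add_eq_inf_sup[of x "Sup S"] by (simp add: algebra_simps le_diff_eq)
  show "m \<le> inf x (Sup S)"
    unfolding m_def using assms by (intro cSUP_least inf_mono order_refl cSup_upper)
qed

definition sc_meet :: "'a::conditionally_complete_lattice set \<Rightarrow> 'a \<Rightarrow> 'a" where
  "sc_meet B t = (SUP b\<in>B. inf t b)"

lemma sc_le_iff_sc_meet: "sc_le A B \<longleftrightarrow> (\<forall>t. sc_meet A t \<le> sc_meet B t)"
  by (simp add: sc_le_def sc_meet_def)

lemma sc_eq_iff_sc_meet: "sc_eq A B \<longleftrightarrow> (\<forall>t. sc_meet A t = sc_meet B t)"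
  by (simp add: sc_eq_def sc_meet_def)

lemma sc_meet_singleton [simp]: "sc_meet {y} t = inf t y"
  by (simp add: sc_meet_def)

lemma sc_meet_upper: "b \<in> B \<Longrightarrow> inf t b \<le> sc_meet B t"
  unfolding sc_meet_def by (rule cSUP_upper[OF _ bdd_above_image_inf])

lemma sc_meet_least: "B \<noteq> {} \<Longrightarrow> (\<And>b. b \<in> B \<Longrightarrow> inf t b \<le> s) \<Longrightarrow> sc_meet B t \<le> s"
  unfolding sc_meet_def by (rule cSUP_least)

lemma sc_meet_mono: "B \<noteq> {} \<Longrightarrow> t \<le> t' \<Longrightarrow> sc_meet B t \<le> sc_meet B t'"
  by (rule sc_meet_least) (auto intro: order_trans[OF _ sc_meet_upper] inf_mono)

lemma diff_sc_meet_mono: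
  fixes B :: "'a::{ordered_ab_group_add, conditionally_complete_lattice} set"
  assumes "B \<noteq> {}" and "t \<le> t'"
  shows "t - sc_meet B t \<le> t' - sc_meet B t'"
proof -
  have "sc_meet B t' \<le> (t' - t) + sc_meet B t"
  proof (rule sc_meet_least[OF assms(1)])
    fix b assume "b \<in> B"
    have "inf t' b \<le> inf t' ((t' - t) + b)"
      using assms(2) by (simp add: le_infI2)
    also have "\<dots> = (t' - t) + inf t b"
      by (simp add: group_add_sup_inf_distribs)
    also have "\<dots> \<le> (t' - t) + sc_meet B t"
      using \<open>b \<in> B\<close> by (simp add: sc_meet_upper)
    finally show "inf t' b \<le> (t' - t) + sc_meet B t" .
  qed
  then show ?thesis
    by (simp add: algebra_simps)
qed

lemma inf_sc_meet_le:
  fixes B :: "'a::{ordered_ab_group_add, conditionally_complete_lattice} set"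
  assumes "B \<noteq> {}"
  shows "inf x (sc_meet B t) \<le> sc_meet B x"
proof -
  have "inf x (sc_meet B t) = (SUP b\<in>B. inf x (inf t b))"
    unfolding sc_meet_def using assms
    by (simp add: inf_cSup_distrib[OF _ bdd_above_image_inf] image_image)
  also have "\<dots> \<le> sc_meet B x"
    using assms by (intro cSUP_least order_trans[OF inf_mono[OF order_refl inf_le2] sc_meet_upper])
  finally show ?thesis .
qed

lemma sc_le_trans: "sc_le A B \<Longrightarrow> sc_le B C \<Longrightarrow> sc_le A C"
  unfolding sc_le_def by (meson order_trans)

lemma sc_le_singleton_of_mem: "a \<in> A \<Longrightarrow> sc_le {a} A"
  by (simp add: sc_le_iff_sc_meet sc_meet_upper)

lemma sc_le_image_of_singletons:
  "A \<noteq> {} \<Longrightarrow> (\<And>a. a \<in> A \<Longrightarrow> sc_le {f a} B) \<Longrightarrow> sc_le (f ` A) B"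
  by (auto simp: sc_le_iff_sc_meet intro: sc_meet_least)

lemma sc_le_singleton_iff:
  fixes B :: "'a::{ordered_ab_group_add, conditionally_complete_lattice} set"
  assumes "B \<noteq> {}"
  shows "sc_le {y} B \<longleftrightarrow> y \<le> sc_meet B y"
proof
  assume "sc_le {y} B"
  then show "y \<le> sc_meet B y"
    by (auto simp: sc_le_iff_sc_meet dest: spec[of _ y])
next
  assume "y \<le> sc_meet B y"
  then have "inf x y \<le> sc_meet B x" for x
    by (rule order_trans[OF inf_mono[OF order_refl] inf_sc_meet_le[OF assms]])
  then show "sc_le {y} B"
    by (simp add: sc_le_iff_sc_meet)
qed

lemma sc_le_sc_meet:
  fixes B :: "'a::{ordered_ab_group_add, conditionally_complete_lattice} set"
  shows "B \<noteq> {} \<Longrightarrow> sc_le {sc_meet B t} B"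
  by (simp add: sc_le_iff_sc_meet inf_sc_meet_le)

lemma updirected_image:
  assumes "updirected A" and "mono f"
  shows "updirected (f ` A)"
  unfolding updirected_def
proof (intro conjI ballI)
  show "f ` A \<noteq> {}"
    using assms(1) by (simp add: updirected_def)
  fix u v assume "u \<in> f ` A" "v \<in> f ` A"
  then obtain a b where "a \<in> A" "b \<in> A" "u = f a" "v = f b"
    by blast
  moreover obtain c where "c \<in> A" "a \<le> c" "b \<le> c"
    using assms(1) \<open>a \<in> A\<close> \<open>b \<in> A\<close> unfolding updirected_def by blast
  ultimately show "\<exists>w\<in>f ` A. u \<le> w \<and> v \<le> w"
    using assms(2) by (auto dest: monoD)
qed

lemma sc_eq_sc_add_image:
  fixes A :: "'a::{ordered_ab_semigroup_add, conditionally_complete_lattice} set"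
  assumes "updirected A" and "mono f" and "mono g" and "\<And>a. f a + g a = a"
  shows "sc_eq A (sc_add (f ` A) (g ` A))"
  unfolding sc_eq_iff_sc_meet
proof (intro allI antisym)
  have "A \<noteq> {}"
    using assms(1) by (simp add: updirected_def)
  show "sc_meet A t \<le> sc_meet (sc_add (f ` A) (g ` A)) t" for t
  proof (rule sc_meet_least[OF \<open>A \<noteq> {}\<close>])
    fix a assume "a \<in> A"
    then have "f a + g a \<in> sc_add (f ` A) (g ` A)"
      by (auto simp: sc_add_def)
    from sc_meet_upper[OF this] show "inf t a \<le> sc_meet (sc_add (f ` A) (g ` A)) t"
      by (simp add: assms(4))
  qed
  show "sc_meet (sc_add (f ` A) (g ` A)) t \<le> sc_meet A t" for t
  proof (rule sc_meet_least)
    show "sc_add (f ` A) (g ` A) \<noteq> {}"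
      using \<open>A \<noteq> {}\<close> by (auto simp: sc_add_def)
    fix v assume "v \<in> sc_add (f ` A) (g ` A)"
    then obtain a1 a2 where "a1 \<in> A" "a2 \<in> A" and v: "v = f a1 + g a2"
      by (auto simp: sc_add_def)
    then obtain a where "a \<in> A" "a1 \<le> a" "a2 \<le> a"
      using assms(1) unfolding updirected_def by blast
    then have "v \<le> a"
      using assms(2-4) v by (metis add_mono monoD)
    then show "inf t v \<le> sc_meet A t"
      by (rule order_trans[OF inf_mono[OF order_refl] sc_meet_upper[OF \<open>a \<in> A\<close>]])
  qed
qed

lemma sc_le_riesz_remainder:
  fixes Y Z :: "'a::{ordered_ab_group_add, conditionally_complete_lattice} set"
  assumes "Y \<noteq> {}" and "updirected Z" and "c\<^sub>0 \<in> Z" and "sc_le {a} (sc_add Y Z)"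
  shows "sc_le {a - sc_meet Y (a - c\<^sub>0)} Z"
proof -
  define y where "y = sc_meet Y (a - c\<^sub>0)"
  define z where "z = a - y"
  have "sc_add Y Z \<noteq> {}"
    using assms(1,3) by (auto simp: sc_add_def)
  then have "a \<le> sc_meet (sc_add Y Z) a"
    using assms(4) sc_le_singleton_iff by blast
  also have "\<dots> \<le> sc_meet Z z + y"
  proof (rule sc_meet_least[OF \<open>sc_add Y Z \<noteq> {}\<close>])
    fix w assume "w \<in> sc_add Y Z"
    then obtain b c where "b \<in> Y" "c \<in> Z" and w: "w = b + c"
      by (auto simp: sc_add_def)
    then obtain c' where "c' \<in> Z" "c \<le> c'" "c\<^sub>0 \<le> c'"
      using assms(2,3) unfolding updirected_def by blast
    have "inf a (b + c') - c' = inf (a - c') b"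
      by (simp add: group_add_sup_inf_distribs algebra_simps)
    also have "\<dots> \<le> inf (a - c\<^sub>0) b"
      using \<open>c\<^sub>0 \<le> c'\<close> by (intro inf_mono diff_left_mono order_refl)
    also have "\<dots> \<le> y"
      unfolding y_def using \<open>b \<in> Y\<close> by (rule sc_meet_upper)
    finally have "inf a (b + c') - y \<le> c'"
      by (simp add: diff_le_eq add.commute)
    moreover have "inf a (b + c') - y \<le> z"
      unfolding z_def by (intro diff_right_mono inf_le1)
    ultimately have "inf a (b + c') - y \<le> inf z c'"
      by simp
    moreover have "inf a w \<le> inf a (b + c')"
      unfolding w using \<open>c \<le> c'\<close> by (intro inf_mono order_refl add_left_mono)
    ultimately have "inf a w - y \<le> inf z c'"
      by (meson diff_right_mono order_trans)
    also have "\<dots> \<le> sc_meet Z z"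
      using \<open>c' \<in> Z\<close> by (rule sc_meet_upper)
    finally show "inf a w \<le> sc_meet Z z + y"
      by (simp add: diff_le_eq)
  qed
  finally have "z \<le> sc_meet Z z"
    unfolding z_def by (simp add: diff_le_eq)
  then show ?thesis
    using assms(2) sc_le_singleton_iff unfolding z_def y_def updirected_def by blast
qed

lemma riesz_splitting:
  fixes Y Z :: "'a::{ordered_ab_group_add, conditionally_complete_lattice} set"
  assumes "updirected Y" and "updirected Z"
  obtains y z
  where "mono y" and "mono z" and "\<And>a. y a + z a = a" and "\<And>a. sc_le {y a} Y"
    and "\<And>a. sc_le {a} (sc_add Y Z) \<Longrightarrow> sc_le {z a} Z"
proof -
  have "Y \<noteq> {}" and "\<exists>c\<^sub>0. c\<^sub>0 \<in> Z"
    using assms by (auto simp: updirected_def)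
  then obtain c\<^sub>0 where "c\<^sub>0 \<in> Z"
    by blast
  define y where "y a = sc_meet Y (a - c\<^sub>0)" for a
  define z where "z a = a - y a" for a
  have "mono y"
    unfolding y_def using \<open>Y \<noteq> {}\<close> by (auto intro!: monoI sc_meet_mono diff_right_mono)
  moreover have "mono z"
  proof (rule monoI)
    fix a a' :: 'a
    assume "a \<le> a'"
    then have "(a - c\<^sub>0) - y a + c\<^sub>0 \<le> (a' - c\<^sub>0) - y a' + c\<^sub>0"
      unfolding y_def using \<open>Y \<noteq> {}\<close> by (intro add_right_mono diff_sc_meet_mono diff_right_mono)
    then show "z a \<le> z a'"
      by (simp add: z_def)
  qed
  moreover have "sc_le {y a} Y" for a
    unfolding y_def using \<open>Y \<noteq> {}\<close> by (rule sc_le_sc_meet)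
  moreover have "sc_le {z a} Z" if "sc_le {a} (sc_add Y Z)" for a
    unfolding z_def y_def using \<open>Y \<noteq> {}\<close> assms(2) \<open>c\<^sub>0 \<in> Z\<close> that
    by (rule sc_le_riesz_remainder)
  moreover have "y a + z a = a" for a
    by (simp add: z_def)
  ultimately show ?thesis
    using that by blast
qed

theorem mainTheorem11:
  fixes X Y Z :: "'a::{ordered_real_vector, conditionally_complete_lattice} set"
  assumes "updirected X" and "updirected Y" and "updirected Z"
    and "sc_le X (sc_add Y Z)"
  shows "(\<exists>Y1 Z1. updirected Y1 \<and> updirected Z1 \<and> sc_le Y1 Y \<and> sc_le Z1 Z
            \<and> sc_eq X (sc_add Y1 Z1))
       \<and> ((\<exists>x0. sc_eq X {x0}) \<longrightarrow>
            (\<exists>y1 z1. sc_le {y1} Y \<and> sc_le {z1} Z \<and> sc_eq X (sc_add {y1} {z1})))"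
proof -
  obtain y z where "mono y" "mono z" and sum: "\<And>a. y a + z a = a"
    and y_le: "\<And>a. sc_le {y a} Y" and z_le: "\<And>a. sc_le {a} (sc_add Y Z) \<Longrightarrow> sc_le {z a} Z"
    using riesz_splitting[OF assms(2,3)] by blast
  have z_le_X: "sc_le {z a} Z" if "sc_le {a} X" for a
    using sc_le_trans[OF that assms(4)] by (rule z_le)
  have "X \<noteq> {}"
    using assms(1) by (simp add: updirected_def)
  have "updirected (y ` X) \<and> updirected (z ` X) \<and> sc_le (y ` X) Y \<and> sc_le (z ` X) Z
        \<and> sc_eq X (sc_add (y ` X) (z ` X))"
  proof (intro conjI)
    show "updirected (y ` X)"
      using assms(1) \<open>mono y\<close> by (rule updirected_image)
    show "updirected (z ` X)"
      using assms(1) \<open>mono z\<close> by (rule updirected_image)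
    show "sc_le (y ` X) Y"
      by (rule sc_le_image_of_singletons[OF \<open>X \<noteq> {}\<close> y_le])
    show "sc_le (z ` X) Z"
      by (rule sc_le_image_of_singletons[OF \<open>X \<noteq> {}\<close> z_le_X[OF sc_le_singleton_of_mem]])
    show "sc_eq X (sc_add (y ` X) (z ` X))"
      using assms(1) \<open>mono y\<close> \<open>mono z\<close> sum by (rule sc_eq_sc_add_image)
  qed
  moreover have "sc_le {y x\<^sub>0} Y \<and> sc_le {z x\<^sub>0} Z \<and> sc_eq X (sc_add {y x\<^sub>0} {z x\<^sub>0})"
    if "sc_eq X {x\<^sub>0}" for x\<^sub>0
  proof (intro conjI)
    have "sc_le {x\<^sub>0} X"
      using that by (simp add: sc_eq_def sc_le_def)
    then show "sc_le {z x\<^sub>0} Z"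
      by (rule z_le_X)
    have "sc_add {y x\<^sub>0} {z x\<^sub>0} = {x\<^sub>0}"
      using sum[of x\<^sub>0] by (simp add: sc_add_def)
    then show "sc_eq X (sc_add {y x\<^sub>0} {z x\<^sub>0})"
      using that by simp
  qed (rule y_le)
  ultimately show ?thesis
    by blast
qed

end
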